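(* Let $k\ge 3$ and let $G=(V,E)$ be a $k$-uniform hm-bipartite hypergraph with adjacency tensor $\mathcal A$. Then the spectrum of $\mathcal A$ is invariant under multiplication by any $k$-th root of unity: for every $\alpha\in\mathbb C$ with $\alpha^k=1$ and every $\lambda\in\mathbb C$, $\lambda$ is an eigenvalue of $\mathcal A$ if and only if $\alpha\lambda$ is, and they have the same algebraic multiplicity.
   Context: A $k$-uniform hypergraph $G=(V,E)$ has vertex set $V=[n]=\{1,\dots,n\}$ ($n\ge k$) and edge set $E$ consisting of $k$-element subsets of $V$. For $i\in V$, $E_i=\{e\in E: i\in e\}$ and $d_i=|E_i|$ is the degree of $i$. The adjacency tensor $\mathcal A=(a_{i_1\dots i_k})$ is the order-$k$, dimension-$n$ tensor with $a_{i_1\dots i_k}=\frac{1}{(k-1)!}$ if $\{i_1,\dots,i_k\}\in E$ and $0$ otherwise. For a tensor $\mathcal T=(t_{i_1\dots i_k})$ and $\mathbf x\in\mathbb C^n$, $\mathcal T\mathbf x^{k-1}\in\mathbb C^n$ has $i$-th entry $\sum_{i_2,\dots,i_k\in[n]}t_{ii_2\dots i_k}x_{i_2}\cdots x_{i_k}$; in particular $(\mathcal A\mathbf x^{k-1})_i=\sum_{e\in E_i}\prod_{j\in e\setminus\{i\}}x_j$. $\mathcal I$ denotes the identity tensor ($1$ exactly on the diagonal $i_1=\dots=i_k$). $\lambda\in\mathbb C$ is an eigenvalue of $\mathcal T$ with eigenvector $\mathbf x\in\mathbb C^n\setminus\{0\}$ if $(\lambda\mathcal I-\mathcal T)\mathbf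 x^{k-1}=0$, i.e. $(\mathcal T\mathbf x^{k-1})_i=\lambda x_i^{k-1}$ for all $i$. The characteristic polynomial is $\chi_{\mathcal T}(\lambda)=\mathrm{Det}(\lambda\mathcal I-\mathcal T)$, where $\mathrm{Det}$ is the tensor determinant (the resultant of the polynomial system $\mathcal T\mathbf x^{k-1}=0$, normalized so $\mathrm{Det}(\mathcal I)=1$); it is monic of degree $n(k-1)^{n-1}$, its roots are exactly the eigenvalues, and the algebraic multiplicity of an eigenvalue is its multiplicity as a root. The spectrum is the multiset of roots. $G$ is hm-bipartite if either $E=\emptyset$ or there is a partition $V=V_1\cup V_2$ with $V_1,V_2\neq\emptyset$ such that every edge $e\in E$ satisfies $|e\cap V_1|=1$ (and hence $|e\cap V_2|=k-1$). *)

theory Defs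
  imports Complex_Main "HOL-Computational_Algebra.Polynomial" "HOL-Combinatorics.Permutations"
begin

definition uniform_hypergraph :: "nat \<Rightarrow> nat \<Rightarrow> nat set set \<Rightarrow> bool" where
  "uniform_hypergraph n k E \<longleftrightarrow> n \<ge> k \<and> (\<forall>e\<in>E. e \<subseteq> {1..n} \<and> card e = k)"

definition hm_bipartite :: "nat \<Rightarrow> nat set set \<Rightarrow> bool" where
  "hm_bipartite n E \<longleftrightarrow> E = {} \<or>
     (\<exists>V1 V2. V1 \<union> V2 = {1..n} \<and> V1 \<inter> V2 = {} \<and> V1 \<noteq> {} \<and> V2 \<noteq> {} \<and>
              (\<forall>e\<in>E. card (e \<inter> V1) = 1))"

text \<open>A tensor of order k, dimension n is a function on index lists (i_1,...,i_k) with
  entries in {1..n}; only its values on such lists matter.\<close>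

type_synonym tensor = "nat list \<Rightarrow> complex"

definition adj_tensor :: "nat \<Rightarrow> nat set set \<Rightarrow> tensor" where
  "adj_tensor k E = (\<lambda>is. if length is = k \<and> set is \<in> E then 1 / of_nat (fact (k - 1)) else 0)"

definition index_lists :: "nat \<Rightarrow> nat \<Rightarrow> nat list set" where
  "index_lists n m = {is. length is = m \<and> set is \<subseteq> {1..n}}"

definition tensor_apply :: "nat \<Rightarrow> nat \<Rightarrow> tensor \<Rightarrow> (nat \<Rightarrow> complex) \<Rightarrow> nat \<Rightarrow> complex" where
  "tensor_apply n k T x i = (\<Sum>is\<in>index_lists n (k - 1). T (i # is) * prod_list (map x is))"

definition is_eigenvalue :: "nat \<Rightarrow> nat \<Rightarrow> tensor \<Rightarrow> complex \<Rightarrow> bool" where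
  "is_eigenvalue n k T lam \<longleftrightarrow>
     (\<exists>x :: nat \<Rightarrow> complex. (\<exists>j\<in>{1..n}. x j \<noteq> 0) \<and>
        (\<forall>i\<in>{1..n}. tensor_apply n k T x i = lam * x i ^ (k - 1)))"

definition monomials :: "nat \<Rightarrow> nat \<Rightarrow> (nat \<Rightarrow> nat) set" where
  "monomials n D = {a. (\<forall>j. j \<notin> {1..n} \<longrightarrow> a j = 0) \<and> sum a {1..n} = D}"

definition tensor_coeff :: "nat \<Rightarrow> nat \<Rightarrow> tensor \<Rightarrow> nat \<Rightarrow> (nat \<Rightarrow> nat) \<Rightarrow> complex" where
  "tensor_coeff n k T i g =
     (\<Sum>is\<in>{is\<in>index_lists n (k - 1). (\<lambda>j. count_list is j) = g}. T (i # is))"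

definition det_on :: "'a set \<Rightarrow> ('a \<Rightarrow> 'a \<Rightarrow> 'b::comm_ring_1) \<Rightarrow> 'b" where
  "det_on S M = (\<Sum>p\<in>{p. p permutes S}. of_int (sign p) * (\<Prod>a\<in>S. M a (p a)))"

text \<open>Macaulay matrix (in degree D = n(d-1)+1, d = k-1) of the system
  F_i = lambda x_i^d - (T x^d)_i, with coefficients in C[lambda].
  The row of a monomial x^a is (x^a / x_i^d) F_i, where i is the least index with x_i^d | x^a.\<close>
definition mac_sel :: "nat \<Rightarrow> nat \<Rightarrow> (nat \<Rightarrow> nat) \<Rightarrow> nat" where
  "mac_sel n d a = (LEAST i. i \<in> {1..n} \<and> d \<le> a i)"

definition mac_reduced :: "nat \<Rightarrow> nat \<Rightarrow> (nat \<Rightarrow> nat) \<Rightarrow> bool" where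
  "mac_reduced n d a \<longleftrightarrow> card {i\<in>{1..n}. d \<le> a i} = 1"

definition mac_entry :: "nat \<Rightarrow> nat \<Rightarrow> tensor \<Rightarrow> (nat \<Rightarrow> nat) \<Rightarrow> (nat \<Rightarrow> nat) \<Rightarrow> complex poly" where
  "mac_entry n k T a b =
     (let d = k - 1; i = mac_sel n d a; a' = a(i := a i - d) in
        (if a = b then [:0, 1:] else 0) -
        (if (\<forall>j. a' j \<le> b j) then [: tensor_coeff n k T i (\<lambda>j. b j - a' j) :] else 0))"

text \<open>chi_T(lambda) = Det(lambda I - T) = D_n / D_n' (Macaulay).\<close>
definition char_poly_tensor :: "nat \<Rightarrow> nat \<Rightarrow> tensor \<Rightarrow> complex poly" where
  "char_poly_tensor n k T =
     (let d = k - 1; S = monomials n (n * (d - 1) + 1) in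
        det_on S (mac_entry n k T) div det_on {a\<in>S. \<not> mac_reduced n d a} (mac_entry n k T))"

end

theory Submission
  imports Defs
begin

(* Let V1 be the part of the hm-bipartition that meets every edge exactly once. Multiplying
   the V1-coordinates of x by a k-th root of unity \<alpha> multiplies (A x^(k-1))_i by \<alpha> exactly
   for i outside V1, which turns an eigenpair for \<lambda> into one for \<alpha>\<lambda>. The same substitution
   acts on the Macaulay matrix: its (a, b) entry at \<alpha>\<lambda> equals \<alpha>^(1 + |a| - |b|) times the
   entry at \<lambda>, where |a| is the total degree of x^a in the V1-variables. Such a diagonal
   rescaling multiplies both Macaulay determinants, hence \<chi>, by a nonzero constant, so
   \<chi>(\<alpha>\<lambda>) = c \<chi>(\<lambda>) and the roots \<lambda> and \<alpha>\<lambda> have the same multiplicity. *)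

lemma pcompose_div:
  fixes p q r :: "'a::field poly"
  assumes "degree r \<noteq> 0"
  shows "pcompose (p div q) r = pcompose p r div pcompose q r"
proof (cases "q = 0")
  case False
  have "pcompose p r = pcompose (p div q) r * pcompose q r + pcompose (p mod q) r"
    by (metis div_mult_mod_eq pcompose_add pcompose_mult)
  moreover have "pcompose (p mod q) r div pcompose q r = 0"
  proof (cases "p mod q = 0")
    case False
    with \<open>q \<noteq> 0\<close> have "degree (p mod q) < degree q" by (rule degree_mod_less')
    with assms show ?thesis by (intro div_poly_less) (simp add: degree_pcompose)
  qed simp
  moreover have "pcompose q r \<noteq> 0"
    using False assms pcompose_eq_0[of q r] by auto
  ultimately show ?thesis by simp
qed simp

lemma pcompose_dvd: "p dvd q \<Longrightarrow> pcompose p r dvd pcompose q r"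
  by (metis dvdE dvd_triv_left pcompose_mult)

lemma pcompose_power_left: "pcompose (p ^ m) r = pcompose p r ^ m"
  by (induction m) (simp_all add: pcompose_1 pcompose_mult)

lemma linear_power_dvd_pcompose_scale:
  fixes p :: "'a::field poly"
  assumes "\<alpha> \<noteq> 0" and "[:-(\<alpha> * a), 1:] ^ m dvd p"
  shows "[:-a, 1:] ^ m dvd pcompose p [:0, \<alpha>:]"
proof -
  have "pcompose [:-(\<alpha> * a), 1:] [:0, \<alpha>:] = smult \<alpha> [:-a, 1:]"
    by (simp add: pcompose_pCons)
  then have "pcompose ([:-(\<alpha> * a), 1:] ^ m) [:0, \<alpha>:] = smult (\<alpha> ^ m) ([:-a, 1:] ^ m)"
    by (simp only: pcompose_power_left smult_power)
  with pcompose_dvd[OF assms(2), of "[:0, \<alpha>:]"] assms(1) show ?thesis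
    by (simp add: smult_dvd_iff)
qed

lemma order_pcompose_scale:
  fixes p :: "'a::field poly"
  assumes "\<alpha> \<noteq> 0"
  shows "order a (pcompose p [:0, \<alpha>:]) = order (\<alpha> * a) p"
proof -
  have "[:-a, 1:] ^ m dvd pcompose p [:0, \<alpha>:] \<longleftrightarrow> [:-(\<alpha> * a), 1:] ^ m dvd p" for m
  proof
    have inv: "inverse \<alpha> \<noteq> 0" "inverse \<alpha> * (\<alpha> * a) = a"
      using assms by simp_all
    have undo: "pcompose (pcompose p [:0, \<alpha>:]) [:0, inverse \<alpha>:] = p"
      using assms by (simp add: pcompose_assoc[symmetric] pcompose_pCons)
    assume "[:-a, 1:] ^ m dvd pcompose p [:0, \<alpha>:]"
    then have "[:-(inverse \<alpha> * (\<alpha> * a)), 1:] ^ m dvd pcompose p [:0, \<alpha>:]"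
      by (simp only: inv)
    from linear_power_dvd_pcompose_scale[OF inv(1) this] show "[:-(\<alpha> * a), 1:] ^ m dvd p"
      by (simp only: undo)
  qed (rule linear_power_dvd_pcompose_scale[OF assms])
  then show ?thesis unfolding order_def by (simp only:)
qed

lemma det_on_rescale:
  fixes M N :: "'a \<Rightarrow> 'a \<Rightarrow> 'b::comm_ring_1"
  assumes "\<And>a b. a \<in> S \<Longrightarrow> b \<in> S \<Longrightarrow> f b * N a b = g a * M a b"
  shows "prod f S * det_on S N = prod g S * det_on S M"
proof -
  have "prod f S * (\<Prod>a\<in>S. N a (p a)) = prod g S * (\<Prod>a\<in>S. M a (p a))"
    if p: "p permutes S" for p
  proof -
    have "prod f S * (\<Prod>a\<in>S. N a (p a)) = (\<Prod>a\<in>S. f (p a) * N a (p a))"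
      using prod.permute[OF p, of f] by (simp add: prod.distrib)
    also have "\<dots> = (\<Prod>a\<in>S. g a * M a (p a))"
      using assms permutes_in_image[OF p] by (intro prod.cong) auto
    finally show ?thesis by (simp add: prod.distrib)
  qed
  then show ?thesis
    unfolding det_on_def sum_distrib_left
    by (intro sum.cong refl) (metis mem_Collect_eq mult.left_commute)
qed

lemma pcompose_det_on: "pcompose (det_on S M) r = det_on S (\<lambda>a b. pcompose (M a b) r)"
  unfolding det_on_def
  by (simp add: pcompose_sum pcompose_mult pcompose_prod of_int_poly pcompose_smult)

definition tensor_hm_bipartite :: "nat set \<Rightarrow> tensor \<Rightarrow> bool" where
  "tensor_hm_bipartite V1 T \<longleftrightarrow> (\<forall>is. T is \<noteq> 0 \<longrightarrow> length (filter (\<lambda>j. j \<in> V1) is) = 1)"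

lemma tensor_hm_bipartite_tail:
  assumes "tensor_hm_bipartite V1 T" and "T (i # is) \<noteq> 0"
  shows "length (filter (\<lambda>j. j \<in> V1) is) = (if i \<in> V1 then 0 else 1)"
  using assms unfolding tensor_hm_bipartite_def by (auto split: if_splits)

lemma prod_list_map_scale_on:
  fixes c :: "'a::comm_monoid_mult"
  shows "prod_list (map (\<lambda>j. if j \<in> V then c * x j else x j) xs)
       = c ^ length (filter (\<lambda>j. j \<in> V) xs) * prod_list (map x xs)"
  by (induction xs) (simp_all add: mult_ac)

lemma tensor_apply_scale:
  assumes "tensor_hm_bipartite V1 T"
  shows "tensor_apply n k T (\<lambda>j. if j \<in> V1 then \<alpha> * x j else x j) i
       = (if i \<in> V1 then 1 else \<alpha>) * tensor_apply n k T x i"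
  unfolding tensor_apply_def sum_distrib_left
proof (intro sum.cong refl)
  fix "is"
  show "T (i # is) * prod_list (map (\<lambda>j. if j \<in> V1 then \<alpha> * x j else x j) is)
      = (if i \<in> V1 then 1 else \<alpha>) * (T (i # is) * prod_list (map x is))"
    using tensor_hm_bipartite_tail[OF assms, of i "is"]
    by (cases "T (i # is) = 0") (simp_all add: prod_list_map_scale_on)
qed

lemma is_eigenvalue_scale:
  assumes "tensor_hm_bipartite V1 T" and "\<alpha> ^ k = 1" and "k \<noteq> 0"
    and "is_eigenvalue n k T lam"
  shows "is_eigenvalue n k T (\<alpha> * lam)"
proof -
  obtain x where nonzero: "\<exists>j\<in>{1..n}. x j \<noteq> 0"
    and eigen: "\<forall>i\<in>{1..n}. tensor_apply n k T x i = lam * x i ^ (k - 1)"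
    using assms(4) unfolding is_eigenvalue_def by blast
  have root: "\<alpha> * \<alpha> ^ (k - 1) = 1"
    using assms(2,3) by (metis power_eq_if)
  then have "\<alpha> \<noteq> 0" by auto
  define y where "y = (\<lambda>j. if j \<in> V1 then \<alpha> * x j else x j)"
  have "\<exists>j\<in>{1..n}. y j \<noteq> 0"
    using nonzero \<open>\<alpha> \<noteq> 0\<close> by (auto simp: y_def)
  moreover have "tensor_apply n k T y i = (\<alpha> * lam) * y i ^ (k - 1)" if "i \<in> {1..n}" for i
  proof -
    have "tensor_apply n k T y i = (if i \<in> V1 then 1 else \<alpha>) * (lam * x i ^ (k - 1))"
      unfolding y_def tensor_apply_scale[OF assms(1)] using eigen that by simp
    also have "\<dots> = (\<alpha> * lam) * y i ^ (k - 1)"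
      using root by (simp add: y_def power_mult_distrib mult_ac)
    finally show ?thesis .
  qed
  ultimately show ?thesis unfolding is_eigenvalue_def by blast
qed

lemma is_eigenvalue_scale_iff:
  assumes "tensor_hm_bipartite V1 T" and "\<alpha> ^ k = 1" and "k \<noteq> 0"
  shows "is_eigenvalue n k T (\<alpha> * lam) \<longleftrightarrow> is_eigenvalue n k T lam"
proof
  have "\<alpha> \<noteq> 0" using assms(2,3) by (auto simp: power_0_left)
  then have "lam = inverse \<alpha> * (\<alpha> * lam)" by simp
  moreover have "inverse \<alpha> ^ k = 1" using assms(2) by (simp add: power_inverse)
  moreover assume "is_eigenvalue n k T (\<alpha> * lam)"
  ultimately show "is_eigenvalue n k T lam"
    using is_eigenvalue_scale[OF assms(1)] assms(3) by metis
qed (rule is_eigenvalue_scale[OF assms])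

lemma sum_count_list_eq_length_filter:
  assumes "finite V"
  shows "(\<Sum>j\<in>V. count_list xs j) = length (filter (\<lambda>j. j \<in> V) xs)"
proof (induction xs)
  case (Cons x xs)
  have "(\<Sum>j\<in>V. count_list (x # xs) j) = (\<Sum>j\<in>V. (if x = j then 1 else 0) + count_list xs j)"
    by (intro sum.cong) auto
  with Cons assms show ?case by (simp add: sum.distrib)
qed simp

lemma mac_sel_bound:
  assumes "a \<in> monomials n (n * (d - 1) + 1)" and "d \<noteq> 0"
  shows "mac_sel n d a \<in> {1..n}" and "d \<le> a (mac_sel n d a)"
proof -
  have "\<exists>i. i \<in> {1..n} \<and> d \<le> a i"
  proof (rule ccontr)
    assume "\<nexists>i. i \<in> {1..n} \<and> d \<le> a i"
    then have "sum a {1..n} \<le> of_nat (card {1..n}) * (d - 1)"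
      by (intro sum_bounded_above) force
    with assms(1) show False by (simp add: monomials_def)
  qed
  then have "mac_sel n d a \<in> {1..n} \<and> d \<le> a (mac_sel n d a)"
    unfolding mac_sel_def by (rule LeastI_ex)
  then show "mac_sel n d a \<in> {1..n}" and "d \<le> a (mac_sel n d a)" by simp_all
qed

lemma mac_entry_pcompose_scale:
  assumes "k \<ge> 2" and "finite V1" and T: "tensor_hm_bipartite V1 T" and "\<alpha> ^ k = 1"
    and a: "a \<in> monomials n (n * (k - 1 - 1) + 1)"
  shows "smult (\<alpha> ^ sum b V1) (pcompose (mac_entry n k T a b) [:0, \<alpha>:])
       = smult (\<alpha> ^ Suc (sum a V1)) (mac_entry n k T a b)"
proof -
  define d where "d = k - 1"
  define i where "i = mac_sel n d a"
  define a' where "a' = a(i := a i - d)"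
  define c where "c = tensor_coeff n k T i (\<lambda>j. b j - a' j)"
  have "d \<noteq> 0" and k: "k = Suc d" using assms(1) by (auto simp: d_def)
  have "d \<le> a i" using mac_sel_bound(2)[OF a] \<open>d \<noteq> 0\<close> by (simp add: i_def d_def)
  then have "a j = a' j + (if j = i then d else 0)" for j
    by (simp add: a'_def)
  then have sum_a: "sum a V1 = sum a' V1 + (if i \<in> V1 then d else 0)"
    using \<open>finite V1\<close> by (simp add: sum.distrib)
  have entry: "mac_entry n k T a b =
      (if a = b then [:0, 1:] else 0) - (if \<forall>j. a' j \<le> b j then [:c:] else 0)"
    by (simp add: mac_entry_def Let_def d_def i_def a'_def c_def)
  have sum_b: "sum b V1 = sum a' V1 + (if i \<in> V1 then 0 else 1)"
    if le: "\<forall>j. a' j \<le> b j" and "c \<noteq> 0"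
  proof -
    obtain "is" where counts: "(\<lambda>j. count_list is j) = (\<lambda>j. b j - a' j)" and "T (i # is) \<noteq> 0"
      using sum.not_neutral_contains_not_neutral[OF \<open>c \<noteq> 0\<close>[unfolded c_def tensor_coeff_def]]
      by blast
    then have "length (filter (\<lambda>j. j \<in> V1) is) = (if i \<in> V1 then 0 else 1)"
      using tensor_hm_bipartite_tail[OF T] by blast
    moreover have "b j = a' j + count_list is j" for j
      using le fun_cong[OF counts, of j] by simp
    ultimately show ?thesis
      using \<open>finite V1\<close> by (simp add: sum.distrib sum_count_list_eq_length_filter)
  qed
  show ?thesis
  proof (cases "(\<forall>j. a' j \<le> b j) \<and> c \<noteq> 0")
    case True
    then have "sum a V1 \<noteq> sum b V1"
      using sum_a sum_b \<open>d \<noteq> 0\<close> by auto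
    then have "mac_entry n k T a b = [:-c:]"
      using True unfolding entry by auto
    moreover have "\<alpha> ^ sum b V1 = \<alpha> ^ Suc (sum a V1)"
    proof (cases "i \<in> V1")
      case True
      then have "\<alpha> ^ Suc (sum a V1) = \<alpha> ^ k * \<alpha> ^ sum b V1"
        using sum_a sum_b \<open>(\<forall>j. a' j \<le> b j) \<and> c \<noteq> 0\<close> by (simp add: k power_add)
      with \<open>\<alpha> ^ k = 1\<close> show ?thesis by simp
    next
      case False
      then show ?thesis
        using sum_a sum_b \<open>(\<forall>j. a' j \<le> b j) \<and> c \<noteq> 0\<close> by simp
    qed
    ultimately show ?thesis by simp
  next
    case False
    then have "mac_entry n k T a b = (if a = b then [:0, 1:] else 0)"
      unfolding entry by auto
    then show ?thesis by (simp add: pcompose_pCons)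
  qed
qed

lemma pcompose_det_on_mac_entry_scale:
  assumes "k \<ge> 2" and "finite V1" and "tensor_hm_bipartite V1 T" and "\<alpha> ^ k = 1"
    and X: "X \<subseteq> monomials n (n * (k - 1 - 1) + 1)"
  shows "pcompose (det_on X (mac_entry n k T)) [:0, \<alpha>:]
       = smult (\<alpha> ^ card X) (det_on X (mac_entry n k T))"
proof -
  define f where "f = (\<lambda>b. [:\<alpha> ^ sum b V1:])"
  have "\<alpha> \<noteq> 0" using assms(1,4) by (auto simp: power_0_left)
  have "prod f X * det_on X (\<lambda>a b. pcompose (mac_entry n k T a b) [:0, \<alpha>:])
      = (\<Prod>a\<in>X. [:\<alpha>:] * f a) * det_on X (mac_entry n k T)"
    using mac_entry_pcompose_scale[OF assms(1-4)] X
    by (intro det_on_rescale) (auto simp: f_def mult.commute)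
  also have "\<dots> = prod f X * ([:\<alpha>:] ^ card X * det_on X (mac_entry n k T))"
    by (simp only: prod.distrib prod_constant mult_ac)
  finally have "prod f X * pcompose (det_on X (mac_entry n k T)) [:0, \<alpha>:]
      = prod f X * smult (\<alpha> ^ card X) (det_on X (mac_entry n k T))"
    by (simp add: pcompose_det_on poly_const_pow)
  moreover have "prod f X \<noteq> 0"
    using \<open>\<alpha> \<noteq> 0\<close> by (cases "finite X") (simp_all add: f_def)
  ultimately show ?thesis by (simp only: mult_cancel_left simp_thms)
qed

lemma char_poly_tensor_pcompose_scale:
  assumes "k \<ge> 2" and "finite V1" and "tensor_hm_bipartite V1 T" and "\<alpha> ^ k = 1"
  obtains c where "c \<noteq> 0"
    and "pcompose (char_poly_tensor n k T) [:0, \<alpha>:] = smult c (char_poly_tensor n k T)"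
proof -
  define S where "S = monomials n (n * (k - 1 - 1) + 1)"
  define S' where "S' = {a\<in>S. \<not> mac_reduced n (k - 1) a}"
  define P where "P = det_on S (mac_entry n k T)"
  define Q where "Q = det_on S' (mac_entry n k T)"
  have "\<alpha> \<noteq> 0" using assms(1,4) by (auto simp: power_0_left)
  have "char_poly_tensor n k T = P div Q"
    by (simp add: char_poly_tensor_def Let_def P_def Q_def S_def S'_def)
  moreover have "pcompose P [:0, \<alpha>:] = smult (\<alpha> ^ card S) P"
    unfolding P_def S_def by (rule pcompose_det_on_mac_entry_scale[OF assms]) simp
  moreover have "pcompose Q [:0, \<alpha>:] = smult (\<alpha> ^ card S') Q"
    unfolding Q_def S'_def by (rule pcompose_det_on_mac_entry_scale[OF assms]) (auto simp: S_def)
  ultimately have "pcompose (char_poly_tensor n k T) [:0, \<alpha>:]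
      = smult (\<alpha> ^ card S * inverse (\<alpha> ^ card S')) (char_poly_tensor n k T)"
    using \<open>\<alpha> \<noteq> 0\<close> by (simp add: pcompose_div div_smult_left div_smult_right mult.commute)
  moreover have "\<alpha> ^ card S * inverse (\<alpha> ^ card S') \<noteq> 0"
    using \<open>\<alpha> \<noteq> 0\<close> by simp
  ultimately show ?thesis using that by blast
qed

lemma order_char_poly_tensor_scale:
  assumes "k \<ge> 2" and "finite V1" and "tensor_hm_bipartite V1 T" and "\<alpha> ^ k = 1"
  shows "order (\<alpha> * lam) (char_poly_tensor n k T) = order lam (char_poly_tensor n k T)"
proof -
  obtain c where "c \<noteq> 0"
    and scale: "pcompose (char_poly_tensor n k T) [:0, \<alpha>:] = smult c (char_poly_tensor n k T)"
    using char_poly_tensor_pcompose_scale[OF assms] .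
  have "\<alpha> \<noteq> 0" using assms(1,4) by (auto simp: power_0_left)
  then have "order (\<alpha> * lam) (char_poly_tensor n k T)
      = order lam (pcompose (char_poly_tensor n k T) [:0, \<alpha>:])"
    by (rule order_pcompose_scale[symmetric])
  also have "\<dots> = order lam (char_poly_tensor n k T)"
    unfolding scale using \<open>c \<noteq> 0\<close> by (rule order_smult)
  finally show ?thesis .
qed

lemma tensor_hm_bipartite_adj_tensor:
  assumes "uniform_hypergraph n k E" and "\<forall>e\<in>E. card (e \<inter> V1) = 1"
  shows "tensor_hm_bipartite V1 (adj_tensor k E)"
  unfolding tensor_hm_bipartite_def
proof (intro allI impI)
  fix "is" assume "adj_tensor k E is \<noteq> 0"
  then have "length is = k" and "set is \<in> E"
    by (auto simp: adj_tensor_def split: if_splits)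
  moreover from this have "distinct is"
    using assms(1) by (intro card_distinct) (simp add: uniform_hypergraph_def)
  moreover have "card (set is \<inter> V1) = 1"
    using assms(2) \<open>set is \<in> E\<close> by blast
  ultimately show "length (filter (\<lambda>j. j \<in> V1) is) = 1"
    by (simp add: distinct_length_filter Int_commute)
qed

lemma hm_bipartite_part:
  assumes "hm_bipartite n E"
  obtains V1 where "V1 \<subseteq> {1..n}" and "\<forall>e\<in>E. card (e \<inter> V1) = 1"
proof (cases "E = {}")
  case False
  with assms show ?thesis
    using that unfolding hm_bipartite_def by blast
qed (use that[of "{}"] in simp)

theorem proposition3p1:
  fixes n k :: nat and E :: "nat set set" and \<alpha> lam :: complex
  assumes "k \<ge> 3"
    and "uniform_hypergraph n k E"
    and "hm_bipartite n E"
    and "\<alpha> ^ k = 1"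
  shows "(is_eigenvalue n k (adj_tensor k E) lam \<longleftrightarrow> is_eigenvalue n k (adj_tensor k E) (\<alpha> * lam))
       \<and> order lam (char_poly_tensor n k (adj_tensor k E))
           = order (\<alpha> * lam) (char_poly_tensor n k (adj_tensor k E))"
proof -
  obtain V1 where "V1 \<subseteq> {1..n}" and parts: "\<forall>e\<in>E. card (e \<inter> V1) = 1"
    using hm_bipartite_part[OF assms(3)] .
  then have "finite V1" by (meson finite_atLeastAtMost finite_subset)
  have "tensor_hm_bipartite V1 (adj_tensor k E)"
    using tensor_hm_bipartite_adj_tensor[OF assms(2) parts] .
  moreover have "k \<ge> 2" and "k \<noteq> 0" using assms(1) by simp_all
  ultimately show ?thesis
    using is_eigenvalue_scale_iff order_char_poly_tensor_scale \<open>finite V1\<close> assms(4) by metis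
qed

end
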